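(* Assume there is a linear operator $\mathfrak{R}:V\to W'$ and constants $\alpha_*>0$, $M^*>0$ with $$\inf_{w\in W,\,w\ne0}\ \sup_{v\in V,\,v\neq0}\frac{\langle\mathfrak{R}v,w\rangle}{\|w\|_W\|v\|_V}\ge\alpha_*,\qquad\|\mathfrak{R}v\|_{W'}\le M^*\|v\|_V\ \ \forall v\in V,$$ and that there is $\kappa>0$ with $$\kappa\|w\|_W\le\sup_{v_\eta\in V_\eta,\ v_\eta\neq0}\frac{\mathcal{A}(w,v_\eta)}{\|v_\eta\|_V}\quad\text{for all } w\in W_\theta\cup S_\theta.$$ Let $u^*_\theta\in\mathrm{cl}^{seq}_w(W_\theta)$ be the weak limit in $W$ of a minimizing sequence $(\tilde w^n_\theta)\subset W_\theta$, i.e. $\lim_n\|u-\tilde w^n_\theta\|_{op,\eta}=\inf_{w_\theta\in W_\theta}\|u-w_\theta\|_{op,\eta}$. Then $$\|u-u^*_\theta\|_W\le\Big(1+2\frac{M^*}{\alpha_*}\frac{M}{\kappa}\Big)\inf_{w_\theta\in W_\theta}\|u-w_\theta\|_W.$$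
   Context: $W$ and $V$ are reflexive separable real Banach spaces, $W'$ the dual of $W$ with duality pairing $\langle\cdot,\cdot\rangle$. $\mathcal{A}:W\times V\to\mathbb{R}$ is a bilinear form with $\mathcal{A}(w,v)\le M\|w\|_W\|v\|_V$, $\mathcal{F}:V\to\mathbb{R}$ is bounded linear, and $u\in W$ is the unique solution of $\mathcal{A}(u,v)=\mathcal{F}(v)$ for all $v\in V$. $W_\theta\subseteq W$ and $V_\eta\subseteq V$ are arbitrary subsets, $V_\eta$ containing an element of nonzero norm. For $w\in W$, $\|w\|_{op,\eta}:=\sup_{v_\eta\in V_\eta,\ \|v_\eta\|_V\neq0}\mathcal{A}(w,v_\eta)/\|v_\eta\|_V$. $S_\theta:=\{w_1-w_2:\ w_1,w_2\in W_\theta\}$. $\mathrm{cl}^{seq}_w(W_\theta)$ is the set of all weak limits in $W$ of sequences in $W_\theta$. *)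

theory Defs
  imports "HOL-Analysis.Analysis"
begin

definition weak_conv :: "(nat \<Rightarrow> 'a::real_normed_vector) \<Rightarrow> 'a \<Rightarrow> bool" where
  "weak_conv xs x \<longleftrightarrow> (\<forall>f :: 'a \<Rightarrow>\<^sub>L real. (\<lambda>n. blinfun_apply f (xs n)) \<longlonglongrightarrow> blinfun_apply f x)"

definition weak_seq_closure :: "'a::real_normed_vector set \<Rightarrow> 'a set" where
  "weak_seq_closure S = {x. \<exists>xs. (\<forall>n. xs n \<in> S) \<and> weak_conv xs x}"

definition reflexive_space :: "'a::real_normed_vector itself \<Rightarrow> bool" where
  "reflexive_space _ \<longleftrightarrow>
     (\<forall>\<phi> :: ('a \<Rightarrow>\<^sub>L real) \<Rightarrow>\<^sub>L real. \<exists>x::'a. \<forall>f. blinfun_apply \<phi> f = blinfun_apply f x)"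

definition separable_space :: "'a::real_normed_vector itself \<Rightarrow> bool" where
  "separable_space _ \<longleftrightarrow> (\<exists>D :: 'a set. countable D \<and> closure D = UNIV)"

definition op_norm_eta ::
  "('w \<Rightarrow> 'v::real_normed_vector \<Rightarrow> real) \<Rightarrow> 'v set \<Rightarrow> 'w \<Rightarrow> real" where
  "op_norm_eta A Veta w = (SUP v\<in>{v \<in> Veta. v \<noteq> 0}. A w v / norm v)"

definition diff_set :: "'a::ab_group_add set \<Rightarrow> 'a set" where
  "diff_set S = {w1 - w2 | w1 w2. w1 \<in> S \<and> w2 \<in> S}"

end

theory Submission
  imports Defs
begin

text \<open>Fix \<open>w \<in> W\<^sub>\<theta>\<close>. Stability on differences and the triangle inequality for the discrete
  operator norm give \<open>\<kappa> \<parallel>w - w\<^sub>n\<parallel> \<le> \<parallel>u - w\<^sub>n\<parallel>\<^sub>o\<^sub>p + M \<parallel>u - w\<parallel>\<close>, and the right-hand side tends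
  to at most \<open>2 M \<parallel>u - w\<parallel>\<close> along the minimizing sequence. The norm is weakly lower
  semicontinuous, but rather than Hahn--Banach the inf-sup condition on \<open>\<R>\<close> supplies the
  weakly continuous functionals \<open>\<langle>\<R> v, \<cdot>\<rangle>\<close> that control the norm up to \<open>M\<^sup>*/\<alpha>\<^sub>*\<close>. Hence
  \<open>\<parallel>u\<^sup>* - w\<parallel> \<le> 2 (M\<^sup>*/\<alpha>\<^sub>*)(M/\<kappa>) \<parallel>u - w\<parallel>\<close>, and the triangle inequality finishes the proof.\<close>

lemma weak_conv_diff:
  assumes "weak_conv xs x"
  shows "weak_conv (\<lambda>n. xs n - y) (x - y)"
  using assms unfolding weak_conv_def by (auto simp: blinfun.diff_right intro: tendsto_diff)

lemma norm_le_of_infsup: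
  fixes R :: "'v::real_normed_vector \<Rightarrow> ('w::real_normed_vector \<Rightarrow>\<^sub>L real)"
  assumes infsup: "x \<noteq> 0 \<Longrightarrow>
      \<alpha> \<le> (SUP v\<in>{v. v \<noteq> 0}. blinfun_apply (R v) x / (norm x * norm v))"
    and nontrivial: "\<exists>v::'v. v \<noteq> 0"
    and R_le: "\<And>v. blinfun_apply (R v) x \<le> C * norm v"
    and C_nonneg: "0 \<le> C"
  shows "\<alpha> * norm x \<le> C"
proof (cases "x = 0")
  case False
  then have nx: "norm x > 0" by simp
  have "\<alpha> \<le> (SUP v\<in>{v. v \<noteq> 0}. blinfun_apply (R v) x / (norm x * norm v))"
    using infsup[OF False] .
  also have "\<dots> \<le> C / norm x"
  proof (rule cSUP_least)
    show "{v::'v. v \<noteq> 0} \<noteq> {}" using nontrivial by auto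
    fix v :: 'v assume "v \<in> {v. v \<noteq> 0}"
    then have "norm v > 0" by simp
    then show "blinfun_apply (R v) x / (norm x * norm v) \<le> C / norm x"
      using R_le[of v] nx by (simp add: divide_simps)
  qed
  finally show ?thesis using nx by (simp add: le_divide_eq)
qed (simp add: C_nonneg)

lemma weak_limit_norm_le:
  fixes R :: "'v::real_normed_vector \<Rightarrow> ('w::real_normed_vector \<Rightarrow>\<^sub>L real)"
  assumes weak: "weak_conv xs x"
    and xs_le: "\<And>n. norm (xs n) \<le> c n" and c_lim: "c \<longlonglongrightarrow> C"
    and R_bound: "\<And>v. norm (R v) \<le> M\<^sub>R * norm v" and M\<^sub>R_nonneg: "0 \<le> M\<^sub>R"
    and infsup: "x \<noteq> 0 \<Longrightarrow>
      \<alpha> \<le> (SUP v\<in>{v. v \<noteq> 0}. blinfun_apply (R v) x / (norm x * norm v))"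
    and nontrivial: "\<exists>v::'v. v \<noteq> 0"
  shows "\<alpha> * norm x \<le> M\<^sub>R * C"
proof (rule norm_le_of_infsup[OF infsup nontrivial])
  show "0 \<le> M\<^sub>R * C"
    using M\<^sub>R_nonneg order_trans[OF norm_ge_zero xs_le]
    by (intro mult_nonneg_nonneg LIMSEQ_le_const[OF c_lim]) auto
  fix v
  have "blinfun_apply (R v) (xs n) \<le> M\<^sub>R * norm v * c n" for n
  proof -
    have "blinfun_apply (R v) (xs n) \<le> norm (R v) * norm (xs n)"
      using norm_blinfun[of "R v" "xs n"] by simp
    also have "\<dots> \<le> M\<^sub>R * norm v * c n"
      using R_bound[of v] xs_le[of n] M\<^sub>R_nonneg by (intro mult_mono) auto
    finally show ?thesis .
  qed
  moreover have "(\<lambda>n. blinfun_apply (R v) (xs n)) \<longlonglongrightarrow> blinfun_apply (R v) x"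
    using weak unfolding weak_conv_def by blast
  ultimately have "blinfun_apply (R v) x \<le> M\<^sub>R * norm v * C"
    by (intro tendsto_le[OF _ tendsto_mult_left[OF c_lim]]) auto
  then show "blinfun_apply (R v) x \<le> M\<^sub>R * C * norm v"
    by (simp add: mult.commute mult.left_commute)
qed

context
  fixes A :: "'w::real_normed_vector \<Rightarrow> 'v::real_normed_vector \<Rightarrow> real"
    and M :: real and Veta :: "'v set"
  assumes A_bound: "\<And>w v. A w v \<le> M * norm w * norm v"
    and Veta_nz: "\<exists>v\<in>Veta. v \<noteq> 0"
begin

lemma bilinear_bound_nonneg:
  fixes w :: 'w
  assumes "bilinear A"
  shows "0 \<le> M * norm w"
proof -
  obtain v where "v \<in> Veta" "v \<noteq> 0" using Veta_nz by auto
  have "A w (- v) = - A w v"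
    using assms unfolding bilinear_def by (simp add: linear_neg)
  then have "0 \<le> M * norm w * norm v"
    using A_bound[of w v] A_bound[of w "- v"] by simp
  with \<open>v \<noteq> 0\<close> show ?thesis by (simp add: zero_le_mult_iff)
qed

lemma op_norm_eta_ge:
  assumes "v \<in> Veta" "v \<noteq> 0"
  shows "A w v / norm v \<le> op_norm_eta A Veta w"
  unfolding op_norm_eta_def
proof (rule cSUP_upper2)
  show "bdd_above ((\<lambda>v. A w v / norm v) ` {v \<in> Veta. v \<noteq> 0})"
    using A_bound by (intro bdd_aboveI2[where M = "M * norm w"]) (simp add: divide_le_eq)
qed (use assms in auto)

lemma op_norm_eta_le: "op_norm_eta A Veta w \<le> M * norm w"
  unfolding op_norm_eta_def
proof (rule cSUP_least)
  show "{v \<in> Veta. v \<noteq> 0} \<noteq> {}" using Veta_nz by auto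
  fix v assume "v \<in> {v \<in> Veta. v \<noteq> 0}"
  then show "A w v / norm v \<le> M * norm w"
    using A_bound[of w v] by (simp add: divide_le_eq)
qed

lemma op_norm_eta_add:
  assumes "bilinear A"
  shows "op_norm_eta A Veta (a + b) \<le> op_norm_eta A Veta a + op_norm_eta A Veta b"
  unfolding op_norm_eta_def[of A Veta "a + b"]
proof (rule cSUP_least)
  show "{v \<in> Veta. v \<noteq> 0} \<noteq> {}" using Veta_nz by auto
  fix v assume v: "v \<in> {v \<in> Veta. v \<noteq> 0}"
  have "A (a + b) v / norm v = A a v / norm v + A b v / norm v"
    using bilinear_ladd[OF assms] by (simp add: add_divide_distrib)
  also have "\<dots> \<le> op_norm_eta A Veta a + op_norm_eta A Veta b"
    using v by (intro add_mono op_norm_eta_ge) auto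
  finally show "A (a + b) v / norm v \<le> op_norm_eta A Veta a + op_norm_eta A Veta b" .
qed

lemma stable_diff_le:
  assumes "bilinear A"
    and stab: "kappa * norm (w - w') \<le> op_norm_eta A Veta (w - w')"
  shows "kappa * norm (w - w') \<le> op_norm_eta A Veta (u - w') + M * norm (u - w)"
proof -
  have "op_norm_eta A Veta (w - w') \<le> op_norm_eta A Veta (u - w') + op_norm_eta A Veta (w - u)"
    using op_norm_eta_add[OF assms(1), of "u - w'" "w - u"] by simp
  moreover have "op_norm_eta A Veta (w - u) \<le> M * norm (u - w)"
    using op_norm_eta_le[of "w - u"] by (simp add: norm_minus_commute)
  ultimately show ?thesis using stab by linarith
qed

lemma INF_op_norm_eta_le:
  assumes "bilinear A" and "0 \<le> kappa"
    and stab: "\<And>w w'. w \<in> Wtheta \<Longrightarrow> w' \<in> Wtheta \<Longrightarrow>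
      kappa * norm (w - w') \<le> op_norm_eta A Veta (w - w')"
    and "w \<in> Wtheta"
  shows "(INF w'\<in>Wtheta. op_norm_eta A Veta (u - w')) \<le> op_norm_eta A Veta (u - w)"
proof (rule cINF_lower2[OF _ \<open>w \<in> Wtheta\<close> order_refl])
  \<comment> \<open>\<open>op_norm_eta\<close> may be negative, so the infimum is meaningful only thanks to stability.\<close>
  have "- op_norm_eta A Veta (w - u) \<le> op_norm_eta A Veta (u - w')" if "w' \<in> Wtheta" for w'
  proof -
    have "0 \<le> kappa * norm (w - w')" using \<open>0 \<le> kappa\<close> by simp
    also have "\<dots> \<le> op_norm_eta A Veta (w - w')" using stab[OF \<open>w \<in> Wtheta\<close> that] .
    also have "\<dots> \<le> op_norm_eta A Veta (w - u) + op_norm_eta A Veta (u - w')"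
      using op_norm_eta_add[OF assms(1), of "w - u" "u - w'"] by simp
    finally show ?thesis by linarith
  qed
  then show "bdd_below ((\<lambda>w'. op_norm_eta A Veta (u - w')) ` Wtheta)"
    by (intro bdd_belowI2)
qed

lemma weak_limit_near_competitor:
  fixes R :: "'v \<Rightarrow> ('w \<Rightarrow>\<^sub>L real)"
  assumes "bilinear A" and kappa_pos: "0 < kappa"
    and stab: "\<And>w w'. w \<in> Wtheta \<Longrightarrow> w' \<in> Wtheta \<Longrightarrow>
      kappa * norm (w - w') \<le> op_norm_eta A Veta (w - w')"
    and wt_in: "\<And>n. wt n \<in> Wtheta"
    and wt_min: "(\<lambda>n. op_norm_eta A Veta (u - wt n)) \<longlonglongrightarrow>
      (INF w'\<in>Wtheta. op_norm_eta A Veta (u - w'))"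
    and weak_lim: "weak_conv wt u_star"
    and R_bound: "\<And>v. norm (R v) \<le> M\<^sub>R * norm v" and M\<^sub>R_nonneg: "0 \<le> M\<^sub>R"
    and alpha_pos: "0 < \<alpha>"
    and infsup: "\<And>x. x \<noteq> 0 \<Longrightarrow>
      \<alpha> \<le> (SUP v\<in>{v. v \<noteq> 0}. blinfun_apply (R v) x / (norm x * norm v))"
    and "w \<in> Wtheta"
  shows "norm (u_star - w) \<le> 2 * (M\<^sub>R / \<alpha>) * (M / kappa) * norm (u - w)"
proof -
  define L where "L = (INF w'\<in>Wtheta. op_norm_eta A Veta (u - w'))"
  define c where "c n = (op_norm_eta A Veta (u - wt n) + M * norm (u - w)) / kappa" for n
  have "norm (wt n - w) \<le> c n" for n
    using stable_diff_le[OF \<open>bilinear A\<close> stab[OF \<open>w \<in> Wtheta\<close> wt_in], where u = u] kappa_pos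
    by (simp add: c_def le_divide_eq norm_minus_commute mult.commute)
  moreover have "c \<longlonglongrightarrow> (L + M * norm (u - w)) / kappa"
    unfolding c_def L_def by (intro tendsto_intros wt_min) (use kappa_pos in simp)
  moreover have "\<exists>v::'v. v \<noteq> 0" using Veta_nz by blast
  ultimately have "\<alpha> * norm (u_star - w) \<le> M\<^sub>R * ((L + M * norm (u - w)) / kappa)"
    by (intro weak_limit_norm_le[OF weak_conv_diff[OF weak_lim] _ _ R_bound M\<^sub>R_nonneg infsup])
  also have "\<dots> \<le> M\<^sub>R * (2 * M * norm (u - w) / kappa)"
    using INF_op_norm_eta_le[OF \<open>bilinear A\<close> _ stab \<open>w \<in> Wtheta\<close>, of u] op_norm_eta_le[of "u - w"]
      kappa_pos M\<^sub>R_nonneg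
    by (intro mult_left_mono divide_right_mono) (simp_all add: L_def)
  finally show ?thesis
    using alpha_pos kappa_pos by (simp add: field_simps)
qed

end

theorem lemma3:
  fixes A :: "'w::banach \<Rightarrow> 'v::banach \<Rightarrow> real"
    and F :: "'v \<Rightarrow> real"
    and u :: 'w and M :: real
    and Wtheta :: "'w set" and Veta :: "'v set"
    and R :: "'v \<Rightarrow> ('w \<Rightarrow>\<^sub>L real)"
    and alpha_star M_star kappa :: real
    and wt :: "nat \<Rightarrow> 'w" and u_star :: 'w
  assumes reflW: "reflexive_space TYPE('w)" and sepW: "separable_space TYPE('w)"
    and reflV: "reflexive_space TYPE('v)" and sepV: "separable_space TYPE('v)"
    and bilin: "bilinear A"
    and A_bound: "\<And>w v. A w v \<le> M * norm w * norm v"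
    and F_lin: "bounded_linear F"
    and u_unique: "\<And>w. (\<forall>v. A w v = F v) \<longleftrightarrow> w = u"
    and Veta_nz: "\<exists>v\<in>Veta. norm v \<noteq> 0"
    and R_lin: "linear R"
    and alpha_pos: "alpha_star > 0" and Mstar_pos: "M_star > 0"
    and infsup: "\<And>w. w \<noteq> 0 \<Longrightarrow>
        alpha_star \<le> (SUP v\<in>{v. v \<noteq> 0}. blinfun_apply (R v) w / (norm w * norm v))"
    and R_bound: "\<And>v. norm (R v) \<le> M_star * norm v"
    and kappa_pos: "kappa > 0"
    and kappa_stab: "\<And>w. w \<in> Wtheta \<union> diff_set Wtheta \<Longrightarrow>
        kappa * norm w \<le> op_norm_eta A Veta w"
    and wt_in: "\<And>n. wt n \<in> Wtheta"
    and wt_min: "(\<lambda>n. op_norm_eta A Veta (u - wt n)) \<longlonglongrightarrow>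
        (INF w\<in>Wtheta. op_norm_eta A Veta (u - w))"
    and weak_lim: "weak_conv wt u_star"
  shows "norm (u - u_star) \<le>
    (1 + 2 * (M_star / alpha_star) * (M / kappa)) * (INF w\<in>Wtheta. norm (u - w))"
proof -
  define K where "K = 1 + 2 * (M_star / alpha_star) * (M / kappa)"
  have Veta_nz': "\<exists>v\<in>Veta. v \<noteq> 0" using Veta_nz by auto
  have stab: "kappa * norm (w - w') \<le> op_norm_eta A Veta (w - w')"
    if "w \<in> Wtheta" "w' \<in> Wtheta" for w w'
    using kappa_stab that unfolding diff_set_def by blast
  have near: "norm (u - u_star) \<le> K * norm (u - w)" if "w \<in> Wtheta" for w
  proof -
    have "norm (u - u_star) \<le> norm (u - w) + norm (u_star - w)"
      using norm_triangle_ineq4[of "u - w" "u_star - w"] by simp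
    also have "norm (u_star - w) \<le> 2 * (M_star / alpha_star) * (M / kappa) * norm (u - w)"
      using weak_limit_near_competitor[OF A_bound Veta_nz' bilin kappa_pos stab wt_in wt_min
          weak_lim R_bound _ alpha_pos infsup that] Mstar_pos by simp
    finally show ?thesis by (simp add: K_def algebra_simps)
  qed
  have Wtheta_ne: "Wtheta \<noteq> {}" using wt_in by blast
  have "norm (u - u_star) \<le> K * (INF w\<in>Wtheta. norm (u - w))"
  proof (cases "0 \<le> M")
    case True
    then have "0 < K"
      unfolding K_def using alpha_pos Mstar_pos kappa_pos by (simp add: add_pos_nonneg)
    have "norm (u - u_star) / K \<le> (INF w\<in>Wtheta. norm (u - w))"
      using near \<open>0 < K\<close> by (intro cINF_greatest[OF Wtheta_ne]) (simp add: divide_le_eq mult.commute)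
    with \<open>0 < K\<close> show ?thesis by (simp add: divide_le_eq mult.commute)
  next
    case False
    then have "norm x = 0" for x :: 'w
      using bilinear_bound_nonneg[OF A_bound Veta_nz' bilin, of x] by (simp add: zero_le_mult_iff)
    then have norms: "(\<lambda>w. norm (u - w)) = (\<lambda>_. 0)" "norm (u - u_star) = 0" by auto
    show ?thesis by (simp only: norms cINF_const[OF Wtheta_ne] mult_zero_right order_refl)
  qed
  then show ?thesis unfolding K_def .
qed

end
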